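(* Let $Q$ be a left automorphic loop, $S\le Q$, and let $g_i\in\mathrm{Mlt}_\lambda(Q)$ for $i\in I$. Set $H=\bigcap_{i\in I} g_i(S)$. Then for $x\in Q$, we have $x\in H$ if and only if $x\backslash H=\{x\backslash h : h\in H\}$ is a subloop of $Q$.
   Context: $L_x(y)=xy$; $\mathrm{Mlt}_\lambda(Q)=\langle L_x:x\in Q\rangle$; $\mathrm{Inn}_\lambda(Q)$ is the stabilizer of $1$ in $\mathrm{Mlt}_\lambda(Q)$. A loop is left automorphic if every element of $\mathrm{Inn}_\lambda(Q)$ is an automorphism of $Q$. Left division: $x\backslash y=L_x^{-1}(y)$. If $I=\emptyset$ the intersection is taken to be $Q$. *)

theory Defs
  imports Main
begin

definition loop :: "('a \<Rightarrow> 'a \<Rightarrow> 'a) \<Rightarrow> 'a \<Rightarrow> bool" where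
  "loop m e \<longleftrightarrow> (\<forall>x. m e x = x \<and> m x e = x)
     \<and> (\<forall>a b. \<exists>!x. m a x = b) \<and> (\<forall>a b. \<exists>!y. m y a = b)"

definition ldiv :: "('a \<Rightarrow> 'a \<Rightarrow> 'a) \<Rightarrow> 'a \<Rightarrow> 'a \<Rightarrow> 'a" where
  "ldiv m x y = (THE z. m x z = y)"

definition rdiv :: "('a \<Rightarrow> 'a \<Rightarrow> 'a) \<Rightarrow> 'a \<Rightarrow> 'a \<Rightarrow> 'a" where
  "rdiv m y x = (THE z. m z x = y)"

inductive_set Mlt_left :: "('a \<Rightarrow> 'a \<Rightarrow> 'a) \<Rightarrow> ('a \<Rightarrow> 'a) set" for m where
  id: "id \<in> Mlt_left m"
| L: "f \<in> Mlt_left m \<Longrightarrow> m x \<circ> f \<in> Mlt_left m"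
| Linv: "f \<in> Mlt_left m \<Longrightarrow> inv (m x) \<circ> f \<in> Mlt_left m"

definition Inn_left :: "('a \<Rightarrow> 'a \<Rightarrow> 'a) \<Rightarrow> 'a \<Rightarrow> ('a \<Rightarrow> 'a) set" where
  "Inn_left m e = {f \<in> Mlt_left m. f e = e}"

definition loop_aut :: "('a \<Rightarrow> 'a \<Rightarrow> 'a) \<Rightarrow> ('a \<Rightarrow> 'a) \<Rightarrow> bool" where
  "loop_aut m f \<longleftrightarrow> bij f \<and> (\<forall>x y. f (m x y) = m (f x) (f y))"

definition left_automorphic :: "('a \<Rightarrow> 'a \<Rightarrow> 'a) \<Rightarrow> 'a \<Rightarrow> bool" where
  "left_automorphic m e \<longleftrightarrow> loop m e \<and> (\<forall>f \<in> Inn_left m e. loop_aut m f)"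

definition subloop :: "('a \<Rightarrow> 'a \<Rightarrow> 'a) \<Rightarrow> 'a set \<Rightarrow> bool" where
  "subloop m S \<longleftrightarrow> S \<noteq> {} \<and> (\<forall>x\<in>S. \<forall>y\<in>S. m x y \<in> S \<and> ldiv m x y \<in> S \<and> rdiv m x y \<in> S)"

end

theory Submission
  imports Defs
begin

text \<open>If \<open>x = g s\<close> with \<open>s \<in> S\<close>, then \<open>\<psi> = L\<^sub>x\<^sup>-\<^sup>1 \<circ> g \<circ> L\<^sub>s\<close> lies in the left
multiplication group and fixes \<open>1\<close>, so it is an automorphism; as \<open>L\<^sub>s\<close> permutes \<open>S\<close>,
\<open>x\<setminus>g(S) = \<psi>(S)\<close> is a subloop. Left division by \<open>x\<close> is a bijection, so \<open>x\<setminus>H\<close> is the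
intersection of these subloops. Conversely, if \<open>x\<setminus>H\<close> is a subloop it contains \<open>1\<close>,
i.e. \<open>x\<setminus>h = 1\<close> for some \<open>h \<in> H\<close>, whence \<open>x = h\<close>.\<close>

lemma left_automorphic_imp_loop: "left_automorphic m e \<Longrightarrow> loop m e"
  unfolding left_automorphic_def by simp

lemma loop_mult_unit:
  assumes "loop m e" shows "m x e = x" "m e x = x"
  using assms unfolding loop_def by auto

lemma mult_ldiv_cancel: "loop m e \<Longrightarrow> m x (ldiv m x y) = y"
  unfolding ldiv_def by (rule theI') (simp add: loop_def)

lemma ldiv_mult_cancel: "loop m e \<Longrightarrow> ldiv m x (m x y) = y"
  unfolding ldiv_def by (rule the1_equality) (auto simp: loop_def)

lemma ldiv_unique: "loop m e \<Longrightarrow> m x z = y \<Longrightarrow> ldiv m x y = z"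
  using ldiv_mult_cancel by metis

lemma rdiv_mult_cancel: "loop m e \<Longrightarrow> m (rdiv m y x) x = y"
  unfolding rdiv_def by (rule theI') (simp add: loop_def)

lemma rdiv_unique: "loop m e \<Longrightarrow> m z x = y \<Longrightarrow> rdiv m y x = z"
  unfolding rdiv_def by (rule the1_equality) (auto simp: loop_def)

lemma ldiv_self: "loop m e \<Longrightarrow> ldiv m x x = e"
  by (rule ldiv_unique) (simp_all add: loop_mult_unit)

lemma bij_loop_mult: "loop m e \<Longrightarrow> bij (m x)"
  unfolding bij_def inj_def surj_def by (metis mult_ldiv_cancel ldiv_mult_cancel)

lemma inv_loop_mult: "loop m e \<Longrightarrow> inv (m x) = ldiv m x"
  by (metis bij_inv_eq_iff ext bij_loop_mult mult_ldiv_cancel)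

lemma bij_ldiv:
  assumes "loop m e" shows "bij (ldiv m x)"
  using bij_imp_bij_inv[OF bij_loop_mult[OF assms]] by (simp add: inv_loop_mult[OF assms])

lemma Mlt_left_comp: "f \<in> Mlt_left m \<Longrightarrow> h \<in> Mlt_left m \<Longrightarrow> f \<circ> h \<in> Mlt_left m"
  by (induction f rule: Mlt_left.induct) (auto simp: comp_assoc intro: Mlt_left.intros)

lemma Mlt_left_mult: "m s \<in> Mlt_left m"
  using Mlt_left.L[OF Mlt_left.id, of m s] by simp

lemma subloop_unit: "loop m e \<Longrightarrow> subloop m T \<Longrightarrow> e \<in> T"
  unfolding subloop_def by (metis ex_in_conv ldiv_self)

lemma subloop_mult_image: "loop m e \<Longrightarrow> subloop m S \<Longrightarrow> s \<in> S \<Longrightarrow> m s ` S = S"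
  unfolding subloop_def by (auto simp: image_iff) (metis mult_ldiv_cancel)

lemma subloop_INT:
  assumes "loop m e" and T: "\<And>i. i \<in> I \<Longrightarrow> subloop m (T i)"
  shows "subloop m (\<Inter>i\<in>I. T i)"
  unfolding subloop_def
proof (intro conjI ballI)
  show "(\<Inter>i\<in>I. T i) \<noteq> {}" using subloop_unit[OF assms(1) T] by blast
next
  fix a b assume "a \<in> (\<Inter>i\<in>I. T i)" "b \<in> (\<Inter>i\<in>I. T i)"
  with T show "m a b \<in> (\<Inter>i\<in>I. T i)" "ldiv m a b \<in> (\<Inter>i\<in>I. T i)"
    "rdiv m a b \<in> (\<Inter>i\<in>I. T i)" unfolding subloop_def by blast+
qed

lemma subloop_image_loop_aut:
  assumes L: "loop m e" and "loop_aut m f" and S: "subloop m S"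
  shows "subloop m (f ` S)"
proof -
  have hom: "\<And>x y. f (m x y) = m (f x) (f y)" using assms(2) unfolding loop_aut_def by auto
  have ldiv: "\<And>a b. ldiv m (f a) (f b) = f (ldiv m a b)"
    by (rule ldiv_unique[OF L]) (simp add: hom[symmetric] mult_ldiv_cancel[OF L])
  have rdiv: "\<And>a b. rdiv m (f a) (f b) = f (rdiv m a b)"
    by (rule rdiv_unique[OF L]) (simp add: hom[symmetric] rdiv_mult_cancel[OF L])
  show ?thesis using S unfolding subloop_def by (auto simp: hom[symmetric] ldiv rdiv)
qed

lemma subloop_ldiv_image_translate:
  assumes LA: "left_automorphic m e" and S: "subloop m S"
    and g: "g \<in> Mlt_left m" and x: "x \<in> g ` S"
  shows "subloop m (ldiv m x ` g ` S)"
proof -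
  have L: "loop m e" using LA by (rule left_automorphic_imp_loop)
  obtain s where s: "s \<in> S" "x = g s" using x by auto
  define \<psi> where "\<psi> = inv (m x) \<circ> g \<circ> m s"
  have "\<psi> \<in> Mlt_left m"
    unfolding \<psi>_def comp_assoc by (rule Mlt_left.Linv, rule Mlt_left_comp[OF g Mlt_left_mult])
  moreover have "\<psi> e = e"
    using s by (simp add: \<psi>_def inv_loop_mult[OF L] loop_mult_unit[OF L] ldiv_self[OF L])
  ultimately have "loop_aut m \<psi>"
    using LA unfolding left_automorphic_def Inn_left_def by blast
  then have "subloop m (\<psi> ` S)" using subloop_image_loop_aut[OF L _ S] by blast
  moreover have "\<psi> ` S = ldiv m x ` g ` S"
    unfolding \<psi>_def inv_loop_mult[OF L] image_comp[symmetric]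
    by (simp add: subloop_mult_image[OF L S s(1)])
  ultimately show ?thesis by simp
qed

lemma mem_of_subloop_ldiv_image:
  assumes L: "loop m e" and "subloop m (ldiv m x ` A)"
  shows "x \<in> A"
proof -
  obtain h where "h \<in> A" "ldiv m x h = e" using subloop_unit[OF assms] by auto
  then show ?thesis by (metis L loop_mult_unit(1) mult_ldiv_cancel)
qed

theorem lemma6p5:
  fixes m :: "'a \<Rightarrow> 'a \<Rightarrow> 'a" and e :: 'a and S :: "'a set"
    and I :: "'i set" and g :: "'i \<Rightarrow> 'a \<Rightarrow> 'a" and H :: "'a set" and x :: 'a
  assumes "left_automorphic m e"
    and "subloop m S"
    and "\<forall>i\<in>I. g i \<in> Mlt_left m"
    and "H = (\<Inter>i\<in>I. g i ` S)"
  shows "x \<in> H \<longleftrightarrow> subloop m ((\<lambda>h. ldiv m x h) ` H)"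
proof
  have L: "loop m e" using assms(1) by (rule left_automorphic_imp_loop)
  assume "x \<in> H"
  then have "\<And>i. i \<in> I \<Longrightarrow> subloop m (ldiv m x ` g i ` S)"
    using assms(3,4) by (intro subloop_ldiv_image_translate[OF assms(1,2)]) auto
  then have "subloop m (\<Inter>i\<in>I. ldiv m x ` g i ` S)" by (rule subloop_INT[OF L])
  then show "subloop m ((\<lambda>h. ldiv m x h) ` H)"
    unfolding assms(4) bij_image_INT[OF bij_ldiv[OF L]] by simp
next
  show "subloop m ((\<lambda>h. ldiv m x h) ` H) \<Longrightarrow> x \<in> H"
    by (rule mem_of_subloop_ldiv_image[OF left_automorphic_imp_loop[OF assms(1)]])
qed

end
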